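(* Let $M$ and $N$ be MV-algebras. (1) For every probability map $p\colon M\to N$, the dual map $p'\colon\operatorname{Max}N\to\operatorname{St}M$ is continuous. (2) If $N$ is semisimple, then the assignment $p\mapsto p'$ is a bijection from the set of probability maps $M\to N$ onto the set of their duals.
   Context: For an MV-algebra $(M,\oplus,\neg,0)$: $1\coloneqq\neg 0$, $a\odot b\coloneqq \neg(\neg a\oplus\neg b)$, $a\vee b\coloneqq\neg(\neg a\oplus b)\oplus b$, $a\wedge b\coloneqq\neg(\neg a\vee\neg b)$. A probability map is a function $p\colon M\to N$ between MV-algebras such that for all $a,b\in M$: (P1) $p(a\oplus b)=p(a)\oplus p(b\wedge\neg a)$; (P2) $p(\neg a)=\neg p(a)$; (P3) $p(1)=1$. A state of $M$ is a map $s\colon M\to[0,1]$ with $s(1)=1$ and $s(a\oplus b)=s(a)+s(b)$ whenever $a\odot b=0$; $\operatorname{St}M$ is the set of states with the topology of pointwise convergence (subspace of $[0,1]^M$). $\operatorname{Max}N$ is the compact Hausdorff space of maximal ideals of $N$; for $\mathfrak{n}\in\operatorname{Max}N$ let $h_{\mathfrak{n}}$ be the unique MV-isomorphism of $N/\mathfrak{n}$ onto a subalgebra of $[0,1]$ and $b^*(\mathfrak{n})\coloneqq h_{\mathfrak{n}}(b/\mathfrak{n})$ for $b\in N$ (so $b^*$ is continuous and $b\mapsto b^*$ is an MV-homomorphism). The dual of a probability map $p\colon M\to N$ is $p'\colon \operatorname{Max}N\to\operatorname{St}M$, $p'(\mathfrak{n})(a)\coloneqq p(a)^*(\mathfrak{n})$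 for $a\in M$. $N$ is semisimple if the intersection of its maximal ideals is $\{0\}$. *)

theory Defs
  imports "HOL-Analysis.Analysis"
begin

record 'a mv =
  mv_add :: "'a \<Rightarrow> 'a \<Rightarrow> 'a"
  mv_neg :: "'a \<Rightarrow> 'a"
  mv_zero :: "'a"

definition mv_algebra :: "'a mv \<Rightarrow> bool" where
  "mv_algebra M \<longleftrightarrow>
     (\<forall>x y z. mv_add M (mv_add M x y) z = mv_add M x (mv_add M y z)) \<and>
     (\<forall>x y. mv_add M x y = mv_add M y x) \<and>
     (\<forall>x. mv_add M x (mv_zero M) = x) \<and>
     (\<forall>x. mv_neg M (mv_neg M x) = x) \<and>
     (\<forall>x. mv_add M x (mv_neg M (mv_zero M)) = mv_neg M (mv_zero M)) \<and>
     (\<forall>x y. mv_add M (mv_neg M (mv_add M (mv_neg M x) y)) y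
            = mv_add M (mv_neg M (mv_add M (mv_neg M y) x)) x)"

definition mv_one :: "'a mv \<Rightarrow> 'a" where
  "mv_one M = mv_neg M (mv_zero M)"

definition mv_odot :: "'a mv \<Rightarrow> 'a \<Rightarrow> 'a \<Rightarrow> 'a" where
  "mv_odot M a b = mv_neg M (mv_add M (mv_neg M a) (mv_neg M b))"

definition mv_sup :: "'a mv \<Rightarrow> 'a \<Rightarrow> 'a \<Rightarrow> 'a" where
  "mv_sup M a b = mv_add M (mv_neg M (mv_add M (mv_neg M a) b)) b"

definition mv_inf :: "'a mv \<Rightarrow> 'a \<Rightarrow> 'a \<Rightarrow> 'a" where
  "mv_inf M a b = mv_neg M (mv_sup M (mv_neg M a) (mv_neg M b))"

definition mv_le :: "'a mv \<Rightarrow> 'a \<Rightarrow> 'a \<Rightarrow> bool" where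
  "mv_le M a b \<longleftrightarrow> mv_add M (mv_neg M a) b = mv_one M"

definition prob_map :: "'a mv \<Rightarrow> 'b mv \<Rightarrow> ('a \<Rightarrow> 'b) \<Rightarrow> bool" where
  "prob_map M N p \<longleftrightarrow>
     (\<forall>a b. p (mv_add M a b) = mv_add N (p a) (p (mv_inf M b (mv_neg M a)))) \<and>
     (\<forall>a. p (mv_neg M a) = mv_neg N (p a)) \<and>
     p (mv_one M) = mv_one N"

text \<open>States and the state space (topology: pointwise convergence, i.e. the
  subspace topology of the product topology on functions 'a => real).\<close>
definition mv_state :: "'a mv \<Rightarrow> ('a \<Rightarrow> real) \<Rightarrow> bool" where
  "mv_state M s \<longleftrightarrow>
     (\<forall>a. 0 \<le> s a \<and> s a \<le> 1) \<and> s (mv_one M) = 1 \<and>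
     (\<forall>a b. mv_odot M a b = mv_zero M \<longrightarrow> s (mv_add M a b) = s a + s b)"

definition St :: "'a mv \<Rightarrow> ('a \<Rightarrow> real) set" where
  "St M = {s. mv_state M s}"

definition mv_ideal :: "'a mv \<Rightarrow> 'a set \<Rightarrow> bool" where
  "mv_ideal M I \<longleftrightarrow> mv_zero M \<in> I \<and>
     (\<forall>a b. b \<in> I \<and> mv_le M a b \<longrightarrow> a \<in> I) \<and>
     (\<forall>a\<in>I. \<forall>b\<in>I. mv_add M a b \<in> I)"

definition mv_max_ideal :: "'a mv \<Rightarrow> 'a set \<Rightarrow> bool" where
  "mv_max_ideal M I \<longleftrightarrow> mv_ideal M I \<and> I \<noteq> UNIV \<and>
     (\<forall>J. mv_ideal M J \<and> I \<subseteq> J \<longrightarrow> J = I \<or> J = UNIV)"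

definition MaxSpec :: "'a mv \<Rightarrow> 'a set set" where
  "MaxSpec M = {I. mv_max_ideal M I}"

definition MaxTop :: "'a mv \<Rightarrow> 'a set topology" where
  "MaxTop M = topology_generated_by
     (insert (MaxSpec M) {{m \<in> MaxSpec M. a \<notin> m} | a. True})"

definition semisimple :: "'a mv \<Rightarrow> bool" where
  "semisimple M \<longleftrightarrow> \<Inter> (MaxSpec M) = {mv_zero M}"

definition mv_hom_unit :: "'a mv \<Rightarrow> ('a \<Rightarrow> real) \<Rightarrow> bool" where
  "mv_hom_unit M h \<longleftrightarrow>
     (\<forall>x. 0 \<le> h x \<and> h x \<le> 1) \<and> h (mv_zero M) = 0 \<and>
     (\<forall>x y. h (mv_add M x y) = min 1 (h x + h y)) \<and>
     (\<forall>x. h (mv_neg M x) = 1 - h x)"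

text \<open>b*(m) = h_m(b/m): the unique homomorphism N -> [0,1] with kernel m
  (= h_m composed with the projection N -> N/m), evaluated at b.\<close>
definition mv_star :: "'a mv \<Rightarrow> 'a \<Rightarrow> 'a set \<Rightarrow> real" where
  "mv_star M b m = (THE h. mv_hom_unit M h \<and> {x. h x = 0} = m) b"

definition dual :: "'b mv \<Rightarrow> ('a \<Rightarrow> 'b) \<Rightarrow> 'b set \<Rightarrow> ('a \<Rightarrow> real)" where
  "dual N p = restrict (\<lambda>m. \<lambda>a. mv_star N (p a) m) (MaxSpec N)"

end

theory Submission
  imports Defs
begin

text \<open>
  For a maximal ideal \<open>m\<close> the quotient
  by \<open>m\<close> is a simple MV-chain, and its embedding into [0,1] is built by hand: the value of
  \<open>x\<close> is the limit of \<open>\<lfloor>2^k x\<rfloor> / 2^k\<close>, where \<open>\<lfloor>n x\<rfloor>\<close> is obtained by adding \<open>x\<close> to itself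
  \<open>n\<close> times in Chang's \<open>\<Gamma>\<close>-group of the chain, i.e. on pairs (integer part, fractional part)
  with carries, modulo \<open>m\<close>. Such a homomorphism is determined by its kernel, because every
  homomorphism commutes with the doubling maps \<open>t \<mapsto> min 1 (2t)\<close> and \<open>t \<mapsto> max 0 (2t - 1)\<close>,
  and compositions of these send any given \<open>r < s\<close> in [0,1] to \<open>0\<close> and to a positive number.
  The same separation shows that \<open>{n. r < b*(n)}\<close> is a union of basic open sets, so every
  \<open>b*\<close>, and hence \<open>p'\<close>, is continuous. If \<open>p'\<close> = \<open>q'\<close> then \<open>(p a \<odot> \<not> q a) \<oplus> (q a \<odot> \<not> p a)\<close>
  lies in every maximal ideal, hence vanishes when \<open>N\<close> is semisimple, and so \<open>p a = q a\<close>.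
\<close>

locale mv_alg =
  fixes A :: "'a mv"
  assumes mv: "mv_algebra A"
begin

text \<open>The derived operations of \<open>Defs\<close> as abbreviations, so that the simplifier sees everything
  in terms of \<open>\<oplus>\<close> and \<open>neg\<close>; \<open>\<preceq>\<close> is \<open>mv_le A\<close>.\<close>
abbreviation madd (infixl "\<oplus>" 65) where "x \<oplus> y \<equiv> mv_add A x y"
abbreviation neg where "neg x \<equiv> mv_neg A x"
abbreviation mzero (\<open>\<zero>\<close>) where "\<zero> \<equiv> mv_zero A"
abbreviation mone (\<open>\<one>\<close>) where "\<one> \<equiv> neg \<zero>"
abbreviation modot (infixl "\<odot>" 70) where "x \<odot> y \<equiv> neg (neg x \<oplus> neg y)"
abbreviation msup (infixl "\<squnion>" 65) where "x \<squnion> y \<equiv> neg (neg x \<oplus> y) \<oplus> y"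
abbreviation minf (infixl "\<sqinter>" 70) where "x \<sqinter> y \<equiv> neg (neg x \<squnion> neg y)"
abbreviation mle (infix "\<preceq>" 50) where "x \<preceq> y \<equiv> neg x \<oplus> y = \<one>"

lemma mv_assoc: "x \<oplus> y \<oplus> z = x \<oplus> (y \<oplus> z)" using mv unfolding mv_algebra_def by blast
lemma mv_comm: "x \<oplus> y = y \<oplus> x" using mv unfolding mv_algebra_def by blast
lemma mv_add_zero[simp]: "x \<oplus> \<zero> = x" using mv unfolding mv_algebra_def by blast
lemma mv_neg_neg[simp]: "neg (neg x) = x" using mv unfolding mv_algebra_def by blast
lemma mv_add_one[simp]: "x \<oplus> \<one> = \<one>" using mv unfolding mv_algebra_def by blast
lemma msup_comm: "x \<squnion> y = y \<squnion> x" using mv unfolding mv_algebra_def by blast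

lemma mv_left_comm: "x \<oplus> (y \<oplus> z) = y \<oplus> (x \<oplus> z)"
proof -
  have "x \<oplus> (y \<oplus> z) = (x \<oplus> y) \<oplus> z" by (simp only: mv_assoc)
  also have "\<dots> = (y \<oplus> x) \<oplus> z" by (simp only: mv_comm[of x y])
  finally show ?thesis by (simp only: mv_assoc)
qed
lemmas mv_ac = mv_assoc mv_comm mv_left_comm

lemma mv_zero_add[simp]: "\<zero> \<oplus> x = x" using mv_comm[of \<zero> x] by simp
lemma mv_one_add[simp]: "\<one> \<oplus> x = \<one>" using mv_comm[of \<one> x] by simp
lemma mv_add_neg_self[simp]: "x \<oplus> neg x = \<one>"
proof -
  have "x \<squnion> \<one> = \<one> \<squnion> x" by (rule msup_comm)
  then show ?thesis by (simp add: mv_comm)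
qed
lemma mv_neg_add_self[simp]: "neg x \<oplus> x = \<one>" using mv_comm[of "neg x" x] by simp
lemma mv_add_neg_add[simp]: "x \<oplus> (neg x \<oplus> y) = \<one>" by (simp add: mv_assoc[symmetric])
lemma mv_neg_add_add[simp]: "neg x \<oplus> (x \<oplus> y) = \<one>" by (simp add: mv_assoc[symmetric])

lemma mle_iff_ex_add: "x \<preceq> y \<longleftrightarrow> (\<exists>c. x \<oplus> c = y)"
proof
  assume "x \<preceq> y"
  then have "x \<squnion> y = y" by simp
  then have "y \<squnion> x = y" by (simp add: msup_comm)
  then have "y = x \<oplus> (y \<odot> neg x)" by (simp add: mv_comm)
  then show "\<exists>c. x \<oplus> c = y" by (intro exI[where x="y \<odot> neg x"]) (rule sym)
next
  assume "\<exists>c. x \<oplus> c = y"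
  then show "x \<preceq> y" by auto
qed
lemma mle_add[simp]: "x \<preceq> x \<oplus> c" by simp
lemma mle_add_left[simp]: "x \<preceq> c \<oplus> x" by (simp add: mv_left_comm)
lemma mle_trans: "x \<preceq> y \<Longrightarrow> y \<preceq> z \<Longrightarrow> x \<preceq> z"
proof -
  assume "x \<preceq> y" "y \<preceq> z"
  then obtain c d where "y = x \<oplus> c" "z = y \<oplus> d" unfolding mle_iff_ex_add by metis
  then have "z = x \<oplus> (c \<oplus> d)" by (simp add: mv_assoc)
  then show ?thesis by simp
qed
lemma mle_antisym: "x \<preceq> y \<Longrightarrow> y \<preceq> x \<Longrightarrow> x = y"
proof -
  assume a: "x \<preceq> y" "y \<preceq> x"
  have "x \<squnion> y = y" using a(1) by simp
  moreover have "y \<squnion> x = x" using a(2) by simp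
  ultimately show ?thesis using msup_comm[of x y] by simp
qed
lemma mle_add_mono: "x \<preceq> y \<Longrightarrow> x \<oplus> z \<preceq> y \<oplus> z"
proof -
  assume "x \<preceq> y"
  then obtain c where "y = x \<oplus> c" unfolding mle_iff_ex_add by metis
  then have "y \<oplus> z = (x \<oplus> z) \<oplus> c" by (simp add: mv_ac)
  then show ?thesis by simp
qed
lemma mle_add_mono_left: "x \<preceq> y \<Longrightarrow> z \<oplus> x \<preceq> z \<oplus> y"
  using mle_add_mono[of x y z] by (simp add: mv_comm)
lemma mle_add_mono2: "x \<preceq> y \<Longrightarrow> x' \<preceq> y' \<Longrightarrow> x \<oplus> x' \<preceq> y \<oplus> y'"
  by (meson mle_add_mono mle_add_mono_left mle_trans)
lemma mle_neg: "x \<preceq> y \<Longrightarrow> neg y \<preceq> neg x" by (simp add: mv_comm)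
lemma mle_one[simp]: "x \<preceq> \<one>" by simp
lemma mle_zero[simp]: "\<zero> \<preceq> x" by simp
lemma one_mle: "\<one> \<preceq> x \<Longrightarrow> x = \<one>" by (simp)
lemma mle_residuation: "x \<odot> neg z \<preceq> a \<longleftrightarrow> x \<preceq> a \<oplus> z"
  by (simp add: mv_ac)
lemma mle_modot_mono: "x \<preceq> y \<Longrightarrow> x \<odot> z \<preceq> y \<odot> z"
proof -
  assume "x \<preceq> y"
  then have "neg y \<preceq> neg x" by (rule mle_neg)
  then have "neg y \<oplus> neg z \<preceq> neg x \<oplus> neg z" by (rule mle_add_mono)
  then show ?thesis by (rule mle_neg)
qed
lemma modot_mle: "x \<odot> y \<preceq> y"
proof -
  have "neg y \<preceq> neg x \<oplus> neg y" by (rule mle_add_left)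
  then show ?thesis using mle_neg[of "neg y" "neg x \<oplus> neg y"] by simp
qed
lemma modot_mle_left: "x \<odot> y \<preceq> x"
  using modot_mle[of y x] by (simp add: mv_comm)
lemma mle_iff_modot_neg: "x \<preceq> y \<longleftrightarrow> x \<odot> neg y = \<zero>"
  by (metis mv_neg_neg)

lemma msup_upper2: "y \<preceq> x \<squnion> y" by (rule mle_add_left)
lemma msup_upper1: "x \<preceq> x \<squnion> y" using msup_upper2[of x y] msup_comm[of x y] by metis
lemma msup_absorb: "x \<preceq> y \<Longrightarrow> x \<squnion> y = y" by simp
lemma msup_mono: "x \<preceq> z \<Longrightarrow> x \<squnion> y \<preceq> z \<squnion> y"
proof -
  assume "x \<preceq> z"
  then have "x \<odot> neg y \<preceq> z \<odot> neg y" by (rule mle_modot_mono)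
  then show ?thesis using mle_add_mono[of "x \<odot> neg y" "z \<odot> neg y" y] by simp
qed
lemma msup_least: "x \<preceq> z \<Longrightarrow> y \<preceq> z \<Longrightarrow> x \<squnion> y \<preceq> z"
proof -
  assume a: "x \<preceq> z" "y \<preceq> z"
  have "x \<squnion> y \<preceq> z \<squnion> y" by (rule msup_mono[OF a(1)])
  also have "z \<squnion> y = y \<squnion> z" by (rule msup_comm)
  also have "\<dots> = z" using a(2) by simp
  finally show ?thesis .
qed
lemma minf_lower1: "x \<sqinter> y \<preceq> x" using mle_neg[OF msup_upper1[of "neg x" "neg y"]] by simp
lemma minf_lower2: "x \<sqinter> y \<preceq> y" using mle_neg[OF msup_upper2[of "neg y" "neg x"]] by (simp only: mv_neg_neg)
lemma minf_greatest: "z \<preceq> x \<Longrightarrow> z \<preceq> y \<Longrightarrow> z \<preceq> x \<sqinter> y"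
proof -
  assume a: "z \<preceq> x" "z \<preceq> y"
  have "neg x \<squnion> neg y \<preceq> neg z" by (rule msup_least; rule mle_neg; fact)
  from mle_neg[OF this] show ?thesis by simp
qed
lemma minf_comm: "x \<sqinter> y = y \<sqinter> x" using msup_comm[of "neg x" "neg y"] by simp
lemma minf_absorb: "x \<preceq> y \<Longrightarrow> x \<sqinter> y = x"
proof -
  assume "x \<preceq> y"
  then have "neg y \<preceq> neg x" by (rule mle_neg)
  then have "neg y \<squnion> neg x = neg x" by (rule msup_absorb)
  then have e: "neg x \<squnion> neg y = neg x" by (simp only: msup_comm)
  show ?thesis by (subst e) (rule mv_neg_neg)
qed
lemma add_modot_neg_eq_minf: "(a \<oplus> c) \<odot> neg c = a \<sqinter> neg c" by simp
lemma modot_neg_add_eq_msup: "(a \<odot> neg c) \<oplus> c = a \<squnion> c" by simp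

lemma add_minf_distrib: "a \<oplus> (b \<sqinter> c) = (a \<oplus> b) \<sqinter> (a \<oplus> c)"
proof (rule mle_antisym)
  show "a \<oplus> (b \<sqinter> c) \<preceq> (a \<oplus> b) \<sqinter> (a \<oplus> c)"
    by (intro minf_greatest mle_add_mono_left minf_lower1 minf_lower2)
  have "((a \<oplus> b) \<sqinter> (a \<oplus> c)) \<odot> neg a \<preceq> b \<sqinter> c"
  proof (rule minf_greatest)
    have "((a \<oplus> b) \<sqinter> (a \<oplus> c)) \<odot> neg a \<preceq> (a \<oplus> b) \<odot> neg a"
      by (rule mle_modot_mono) (rule minf_lower1)
    also have "(a \<oplus> b) \<odot> neg a = b \<sqinter> neg a" by (simp add: mv_comm)
    finally show "((a \<oplus> b) \<sqinter> (a \<oplus> c)) \<odot> neg a \<preceq> b" using minf_lower1 mle_trans by blast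
    have "((a \<oplus> b) \<sqinter> (a \<oplus> c)) \<odot> neg a \<preceq> (a \<oplus> c) \<odot> neg a"
      by (rule mle_modot_mono) (rule minf_lower2)
    also have "(a \<oplus> c) \<odot> neg a = c \<sqinter> neg a" by (simp add: mv_comm)
    finally show "((a \<oplus> b) \<sqinter> (a \<oplus> c)) \<odot> neg a \<preceq> c" using minf_lower1 mle_trans by blast
  qed
  then have "(a \<oplus> b) \<sqinter> (a \<oplus> c) \<preceq> (b \<sqinter> c) \<oplus> a"
    by (simp only: mle_residuation)
  then show "(a \<oplus> b) \<sqinter> (a \<oplus> c) \<preceq> a \<oplus> (b \<sqinter> c)"
    using mv_comm[of "b \<sqinter> c" a] by metis
qed

lemma mle_zero_eq: "x \<preceq> \<zero> \<Longrightarrow> x = \<zero>" by (metis mle_antisym mle_zero)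

lemma modot_msup_distrib: "a \<odot> (b \<squnion> c) = (a \<odot> b) \<squnion> (a \<odot> c)"
proof -
  have "neg a \<oplus> (neg b \<sqinter> neg c) = (neg a \<oplus> neg b) \<sqinter> (neg a \<oplus> neg c)" by (rule add_minf_distrib)
  then show ?thesis by simp
qed

lemma modot_neg_minf: "x \<odot> neg (x \<sqinter> y) = x \<odot> neg y"
proof -
  have "x \<odot> neg (x \<sqinter> y) = x \<odot> (neg x \<squnion> neg y)" by simp
  also have "\<dots> = (x \<odot> neg x) \<squnion> (x \<odot> neg y)" by (rule modot_msup_distrib)
  also have "\<dots> = x \<odot> neg y" by simp
  finally show ?thesis .
qed

lemma eq_zero_if_add_absorb: "w \<oplus> r = w \<Longrightarrow> r \<preceq> neg w \<Longrightarrow> r = \<zero>"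
proof -
  assume absorb: "w \<oplus> r = w" and "r \<preceq> neg w"
  then have "r = r \<sqinter> neg w" by (simp only: minf_absorb)
  also have "\<dots> = (r \<oplus> w) \<odot> neg w" by (rule add_modot_neg_eq_minf[symmetric])
  also have "r \<oplus> w = w" using absorb by (simp only: mv_comm)
  finally show "r = \<zero>" by simp
qed

lemma prelinearity: "(x \<odot> neg y) \<sqinter> (y \<odot> neg x) = \<zero>"
proof -
  define w where "w = x \<sqinter> y"
  define p where "p = x \<odot> neg w"
  define q where "q = y \<odot> neg w"
  have "x = p \<oplus> w"
    using msup_absorb[OF minf_lower1[of x y]] unfolding p_def w_def
    by (simp only: modot_neg_add_eq_msup msup_comm)
  moreover have "y = q \<oplus> w"
    using msup_absorb[OF minf_lower2[of x y]] unfolding q_def w_def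
    by (simp only: modot_neg_add_eq_msup msup_comm)
  ultimately have "w = (w \<oplus> p) \<sqinter> (w \<oplus> q)" unfolding w_def by (metis mv_comm)
  then have "w \<oplus> (p \<sqinter> q) = w" by (simp only: add_minf_distrib)
  moreover have "p \<sqinter> q \<preceq> neg w"
    unfolding p_def using mle_trans[OF minf_lower1 modot_mle] .
  ultimately have pq: "p \<sqinter> q = \<zero>" by (rule eq_zero_if_add_absorb)
  have px: "x \<odot> neg w = x \<odot> neg y" unfolding w_def by (rule modot_neg_minf)
  have qy: "y \<odot> neg w = y \<odot> neg x" unfolding w_def by (metis minf_comm modot_neg_minf)
  show ?thesis using pq unfolding p_def q_def px qy .
qed

lemma minf_add_mle: "u \<sqinter> (v \<oplus> w) \<preceq> (u \<sqinter> v) \<oplus> w"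
proof -
  have "(u \<sqinter> (v \<oplus> w)) \<odot> neg w \<preceq> u \<sqinter> v"
  proof (rule minf_greatest)
    show "(u \<sqinter> (v \<oplus> w)) \<odot> neg w \<preceq> u" by (metis mle_trans minf_lower1 modot_mle_left)
    have "(u \<sqinter> (v \<oplus> w)) \<odot> neg w \<preceq> (v \<oplus> w) \<odot> neg w" by (metis mle_modot_mono minf_lower2)
    also have "(v \<oplus> w) \<odot> neg w = v \<sqinter> neg w" by (rule add_modot_neg_eq_minf)
    finally show "(u \<sqinter> (v \<oplus> w)) \<odot> neg w \<preceq> v" by (metis mle_trans minf_lower1)
  qed
  from mle_residuation[THEN iffD1, OF this] show ?thesis .
qed

lemma minf_add_mle_of_minf_zero: "u \<sqinter> v = \<zero> \<Longrightarrow> u \<sqinter> (v \<oplus> w) \<preceq> u \<sqinter> w"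
proof -
  assume h: "u \<sqinter> v = \<zero>"
  have "u \<sqinter> (v \<oplus> w) \<preceq> w" using minf_add_mle[of u v w] h by simp
  then show ?thesis by (rule minf_greatest[OF minf_lower1])
qed

fun nmult :: "nat \<Rightarrow> 'a \<Rightarrow> 'a" where
  "nmult 0 x = \<zero>" | "nmult (Suc n) x = nmult n x \<oplus> x"

lemma nmult_add: "nmult (n + k) x = nmult n x \<oplus> nmult k x"
  by (induction k) (auto simp: mv_ac)
lemma nmult_mono: "n \<le> k \<Longrightarrow> nmult n x \<preceq> nmult k x"
  by (metis le_Suc_ex mle_add nmult_add)
lemma minf_nmult_zero: "u \<sqinter> v = \<zero> \<Longrightarrow> u \<sqinter> nmult n v = \<zero>"
proof (induction n)
  case 0 then show ?case by (simp add: minf_absorb)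
next
  case (Suc n)
  have "u \<sqinter> (v \<oplus> nmult n v) \<preceq> u \<sqinter> nmult n v" by (rule minf_add_mle_of_minf_zero[OF Suc.prems])
  then show ?case using Suc by (simp add: mv_comm mle_zero_eq)
qed
lemma minf_nmult_nmult_zero: "u \<sqinter> v = \<zero> \<Longrightarrow> nmult n u \<sqinter> nmult n v = \<zero>"
proof -
  assume "u \<sqinter> v = \<zero>"
  then have "u \<sqinter> nmult n v = \<zero>" by (rule minf_nmult_zero)
  then have "nmult n v \<sqinter> u = \<zero>" using minf_comm[of u "nmult n v"] by simp
  then have "nmult n v \<sqinter> nmult n u = \<zero>" by (rule minf_nmult_zero)
  then show ?thesis using minf_comm[of "nmult n v" "nmult n u"] by simp
qed

lemma mv_le_iff: "mv_le A a b \<longleftrightarrow> a \<preceq> b" by (simp add: mv_le_def mv_one_def)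

end

locale max_ideal = mv_alg +
  fixes m :: "'a set"
  assumes mx: "mv_max_ideal A m"
begin

lemma zero_mem[simp]: "\<zero> \<in> m" using mx unfolding mv_max_ideal_def mv_ideal_def by blast
lemma mv_ideal_m: "mv_ideal A m" using mx unfolding mv_max_ideal_def by blast
lemma mem_downward: "b \<in> m \<Longrightarrow> a \<preceq> b \<Longrightarrow> a \<in> m"
proof -
  assume h: "b \<in> m" "a \<preceq> b"
  have "\<forall>a b. b \<in> m \<and> mv_le A a b \<longrightarrow> a \<in> m" using mv_ideal_m unfolding mv_ideal_def by (elim conjE)
  moreover have "mv_le A a b" using h(2) by (simp only: mv_le_iff)
  ultimately show ?thesis using h(1) by blast
qed
lemma mem_add: "a \<in> m \<Longrightarrow> b \<in> m \<Longrightarrow> a \<oplus> b \<in> m"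
proof -
  assume "a \<in> m" "b \<in> m"
  moreover have "\<forall>a\<in>m. \<forall>b\<in>m. a \<oplus> b \<in> m" using mv_ideal_m unfolding mv_ideal_def by (elim conjE)
  ultimately show ?thesis by blast
qed
lemma one_not_mem[simp]: "\<one> \<notin> m"
proof
  assume "\<one> \<in> m"
  then have "m = UNIV" using mem_downward mle_one by blast
  then show False using mx unfolding mv_max_ideal_def by blast
qed

lemma ex_nmult_eq_one_if_not_mem: "x \<notin> m \<Longrightarrow> \<exists>z n. z \<in> m \<and> z \<oplus> nmult n x = \<one>"
proof -
  assume xm: "x \<notin> m"
  define J where "J = {a. \<exists>z\<in>m. \<exists>n. (a \<preceq> z \<oplus> nmult n x)}"
  have "mv_ideal A J"
    unfolding mv_ideal_def mv_le_iff
  proof (intro conjI allI ballI impI)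
    show "\<zero> \<in> J" unfolding J_def by (rule CollectI, rule bexI[of _ \<zero>]) auto
    fix a b assume "b \<in> J \<and> a \<preceq> b"
    then show "a \<in> J" unfolding J_def using mle_trans by blast
  next
    fix a b assume "a \<in> J" "b \<in> J"
    then obtain z1 n1 z2 n2 where "z1 \<in> m" and a1: "a \<preceq> z1 \<oplus> nmult n1 x" and "z2 \<in> m"
        and b1: "b \<preceq> z2 \<oplus> nmult n2 x"
      unfolding J_def by blast
    have "a \<oplus> b \<preceq> (z1 \<oplus> nmult n1 x) \<oplus> (z2 \<oplus> nmult n2 x)"
      by (rule mle_add_mono2[OF a1 b1])
    also have "(z1 \<oplus> nmult n1 x) \<oplus> (z2 \<oplus> nmult n2 x) = (z1 \<oplus> z2) \<oplus> nmult (n1 + n2) x"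
      by (simp add: nmult_add mv_ac)
    finally have "a \<oplus> b \<preceq> (z1 \<oplus> z2) \<oplus> nmult (n1 + n2) x" .
    then show "a \<oplus> b \<in> J" unfolding J_def using \<open>z1 \<in> m\<close> \<open>z2 \<in> m\<close> mem_add by blast
  qed
  moreover have "m \<subseteq> J" unfolding J_def by (auto intro!: bexI exI[of _ 0])
  moreover have "x \<in> J" unfolding J_def by (rule CollectI, rule bexI[of _ \<zero>], rule exI[of _ 1]) auto
  ultimately have "J = UNIV" using mx xm unfolding mv_max_ideal_def by blast
  then have "\<one> \<in> J" by simp
  then show ?thesis unfolding J_def using one_mle by blast
qed

lemma quotient_linear: "x \<odot> neg y \<in> m \<or> y \<odot> neg x \<in> m"
proof (rule ccontr)
  assume "\<not> ?thesis"
  then have a: "x \<odot> neg y \<notin> m" and b: "y \<odot> neg x \<notin> m" by auto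
  obtain z1 n1 where z1: "z1 \<in> m" "z1 \<oplus> nmult n1 (x \<odot> neg y) = \<one>" using ex_nmult_eq_one_if_not_mem[OF a] by blast
  obtain z2 n2 where z2: "z2 \<in> m" "z2 \<oplus> nmult n2 (y \<odot> neg x) = \<one>" using ex_nmult_eq_one_if_not_mem[OF b] by blast
  define n where "n = n1 + n2"
  define P where "P = nmult n (x \<odot> neg y)"
  define Q where "Q = nmult n (y \<odot> neg x)"
  define Z where "Z = z1 \<oplus> z2"
  have "nmult n1 (x \<odot> neg y) \<preceq> P" unfolding P_def n_def by (rule nmult_mono) simp
  then have "z1 \<oplus> nmult n1 (x \<odot> neg y) \<preceq> z1 \<oplus> P" by (rule mle_add_mono_left)
  then have "\<one> \<preceq> z1 \<oplus> P" using z1 by simp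
  moreover have "z1 \<oplus> P \<preceq> Z \<oplus> P" unfolding Z_def by (rule mle_add_mono) simp
  ultimately have "\<one> \<preceq> Z \<oplus> P" by (rule mle_trans)
  moreover have "\<one> \<preceq> Z \<oplus> Q"
  proof -
    have "nmult n2 (y \<odot> neg x) \<preceq> Q" unfolding Q_def n_def by (rule nmult_mono) simp
    then have "z2 \<oplus> nmult n2 (y \<odot> neg x) \<preceq> z2 \<oplus> Q" by (rule mle_add_mono_left)
    then have "\<one> \<preceq> z2 \<oplus> Q" using z2 by simp
    moreover have "z2 \<oplus> Q \<preceq> Z \<oplus> Q" unfolding Z_def by (rule mle_add_mono) (rule mle_add_left)
    ultimately show ?thesis by (rule mle_trans)
  qed
  ultimately have "\<one> \<preceq> (Z \<oplus> P) \<sqinter> (Z \<oplus> Q)" by (rule minf_greatest)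
  also have "(Z \<oplus> P) \<sqinter> (Z \<oplus> Q) = Z \<oplus> (P \<sqinter> Q)" by (rule add_minf_distrib[symmetric])
  also have "P \<sqinter> Q = \<zero>" unfolding P_def Q_def by (rule minf_nmult_nmult_zero[OF prelinearity])
  finally have "Z = \<one>" using one_mle by simp
  moreover have "Z \<in> m" unfolding Z_def using z1 z2 mem_add by blast
  ultimately show False by simp
qed

text \<open>Order, equality and the top element of the quotient chain \<open>A/m\<close>, read on representatives.\<close>
definition mod_le (infix "\<sqsubseteq>" 50) where "x \<sqsubseteq> y \<longleftrightarrow> x \<odot> neg y \<in> m"
definition mod_eq (infix "\<doteq>" 50) where "x \<doteq> y \<longleftrightarrow> x \<sqsubseteq> y \<and> y \<sqsubseteq> x"
definition is_one where "is_one x \<longleftrightarrow> neg x \<in> m"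

lemma mod_le_refl[simp]: "x \<sqsubseteq> x" unfolding mod_le_def by simp
lemma mle_imp_mod_le: "x \<preceq> y \<Longrightarrow> x \<sqsubseteq> y" unfolding mod_le_def by simp
lemma mod_le_trans: "x \<sqsubseteq> y \<Longrightarrow> y \<sqsubseteq> z \<Longrightarrow> x \<sqsubseteq> z"
proof -
  assume h: "x \<sqsubseteq> y" "y \<sqsubseteq> z"
  have a1: "x \<preceq> (x \<odot> neg y) \<oplus> y" using msup_upper1[of x y] by simp
  have a2: "y \<preceq> (y \<odot> neg z) \<oplus> z" using msup_upper1[of y z] by simp
  have "(x \<odot> neg y) \<oplus> y \<preceq> (x \<odot> neg y) \<oplus> ((y \<odot> neg z) \<oplus> z)" by (rule mle_add_mono_left[OF a2])
  with a1 have "x \<preceq> (x \<odot> neg y) \<oplus> ((y \<odot> neg z) \<oplus> z)" by (rule mle_trans)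
  then have "x \<preceq> ((x \<odot> neg y) \<oplus> (y \<odot> neg z)) \<oplus> z" by (simp only: mv_assoc)
  then have "x \<odot> neg z \<preceq> (x \<odot> neg y) \<oplus> (y \<odot> neg z)" by (rule mle_residuation[THEN iffD2])
  moreover have "(x \<odot> neg y) \<oplus> (y \<odot> neg z) \<in> m" using h unfolding mod_le_def by (rule mem_add)
  ultimately show ?thesis unfolding mod_le_def using mem_downward by blast
qed
lemma mod_le_total: "x \<sqsubseteq> y \<or> y \<sqsubseteq> x" unfolding mod_le_def by (rule quotient_linear)
lemma mod_le_add: "x \<sqsubseteq> y \<Longrightarrow> x \<oplus> z \<sqsubseteq> y \<oplus> z"
proof -
  assume h: "x \<sqsubseteq> y"
  have a1: "x \<preceq> (x \<odot> neg y) \<oplus> y" using msup_upper1[of x y] by simp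
  then have "x \<oplus> z \<preceq> ((x \<odot> neg y) \<oplus> y) \<oplus> z" by (rule mle_add_mono)
  then have "x \<oplus> z \<preceq> (x \<odot> neg y) \<oplus> (y \<oplus> z)" by (simp only: mv_assoc)
  then have "(x \<oplus> z) \<odot> neg (y \<oplus> z) \<preceq> x \<odot> neg y" by (rule mle_residuation[THEN iffD2])
  then show ?thesis using h unfolding mod_le_def using mem_downward by blast
qed
lemma mod_le_add_left: "x \<sqsubseteq> y \<Longrightarrow> z \<oplus> x \<sqsubseteq> z \<oplus> y"
  using mod_le_add[of x y z] by (simp add: mv_comm)
lemma mod_le_neg: "x \<sqsubseteq> y \<Longrightarrow> neg y \<sqsubseteq> neg x" unfolding mod_le_def by (simp add: mv_comm)

lemma mod_eq_refl[simp]: "x \<doteq> x" unfolding mod_eq_def by simp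
lemma mod_eq_sym: "x \<doteq> y \<Longrightarrow> y \<doteq> x" unfolding mod_eq_def by simp
lemma mod_eq_trans[trans]: "x \<doteq> y \<Longrightarrow> y \<doteq> z \<Longrightarrow> x \<doteq> z" unfolding mod_eq_def by (meson mod_le_trans)
lemma mod_eq_add: "x \<doteq> x' \<Longrightarrow> y \<doteq> y' \<Longrightarrow> x \<oplus> y \<doteq> x' \<oplus> y'"
  unfolding mod_eq_def by (meson mod_le_add mod_le_add_left mod_le_trans)
lemma mod_eq_add_right: "x \<doteq> x' \<Longrightarrow> x \<oplus> y \<doteq> x' \<oplus> y" by (simp add: mod_eq_add)
lemma mod_eq_add_left: "y \<doteq> y' \<Longrightarrow> x \<oplus> y \<doteq> x \<oplus> y'" by (simp add: mod_eq_add)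
lemma mod_eq_neg: "x \<doteq> y \<Longrightarrow> neg x \<doteq> neg y" unfolding mod_eq_def by (simp add: mod_le_neg)
lemma mod_eq_modot: "x \<doteq> x' \<Longrightarrow> y \<doteq> y' \<Longrightarrow> x \<odot> y \<doteq> x' \<odot> y'"
  by (simp add: mod_eq_add mod_eq_neg)

lemma is_one_iff_mod_le: "is_one x \<longleftrightarrow> \<one> \<sqsubseteq> x" unfolding is_one_def mod_le_def by simp
lemma is_one_mono: "x \<sqsubseteq> y \<Longrightarrow> is_one x \<Longrightarrow> is_one y"
  unfolding is_one_iff_mod_le by (meson mod_le_trans)
lemma is_one_cong: "x \<doteq> y \<Longrightarrow> is_one x \<longleftrightarrow> is_one y"
  unfolding mod_eq_def by (meson is_one_mono)
lemma modot_mem_of_not_is_one: "\<not> is_one (x \<oplus> y) \<Longrightarrow> x \<odot> y \<in> m"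
proof -
  assume h: "\<not> is_one (x \<oplus> y)"
  have "x \<sqsubseteq> neg y \<or> neg y \<sqsubseteq> x" by (rule mod_le_total)
  moreover have "neg y \<sqsubseteq> x \<longleftrightarrow> is_one (x \<oplus> y)" unfolding mod_le_def is_one_def by (simp add: mv_comm)
  moreover have "x \<sqsubseteq> neg y \<longleftrightarrow> x \<odot> y \<in> m" unfolding mod_le_def by simp
  ultimately show ?thesis using h by blast
qed
lemma is_one_add_iff: "is_one (x \<oplus> y) \<longleftrightarrow> neg x \<sqsubseteq> y" unfolding mod_le_def is_one_def by simp
lemma is_one_add_iff': "is_one (x \<oplus> y) \<longleftrightarrow> neg y \<sqsubseteq> x" unfolding mod_le_def is_one_def by (simp add: mv_comm)
lemma mod_le_neg_of_not_is_one: "\<not> is_one (x \<oplus> y) \<Longrightarrow> x \<sqsubseteq> neg y"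
  using modot_mem_of_not_is_one unfolding mod_le_def by simp

lemma msup_mod_eq: "a \<sqsubseteq> b \<Longrightarrow> a \<squnion> b \<doteq> b"
proof -
  assume h: "a \<sqsubseteq> b"
  have "(a \<squnion> b) \<odot> neg b \<preceq> a \<odot> neg b" by (rule mle_residuation[THEN iffD2]) simp
  then have "a \<squnion> b \<sqsubseteq> b" using h unfolding mod_le_def using mem_downward by blast
  moreover have "b \<sqsubseteq> a \<squnion> b" by (rule mle_imp_mod_le) (rule msup_upper2)
  ultimately show ?thesis unfolding mod_eq_def by blast
qed
lemma msup_mod_eq': "a \<sqsubseteq> b \<Longrightarrow> b \<squnion> a \<doteq> b"
  using msup_mod_eq msup_comm by metis
lemma not_is_one_zero: "\<not> is_one \<zero>" unfolding is_one_def by simp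

lemma add_cancel_mod: "x \<oplus> c \<doteq> y \<oplus> c \<Longrightarrow> \<not> is_one (x \<oplus> c) \<Longrightarrow> x \<doteq> y"
proof -
  assume e: "x \<oplus> c \<doteq> y \<oplus> c" and n: "\<not> is_one (x \<oplus> c)"
  have n2: "\<not> is_one (y \<oplus> c)" using n e is_one_cong by blast
  have px: "x \<sqsubseteq> neg c" by (rule mod_le_neg_of_not_is_one[OF n])
  have py: "y \<sqsubseteq> neg c" by (rule mod_le_neg_of_not_is_one[OF n2])
  have "(x \<oplus> c) \<odot> neg c \<doteq> x" using mod_eq_neg[OF msup_mod_eq'[OF mod_le_neg[OF px]]] by (simp only: mv_neg_neg)
  then have "x \<doteq> (x \<oplus> c) \<odot> neg c" by (rule mod_eq_sym)
  also have "(x \<oplus> c) \<odot> neg c \<doteq> (y \<oplus> c) \<odot> neg c" by (rule mod_eq_modot[OF e mod_eq_refl])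
  also have "(y \<oplus> c) \<odot> neg c \<doteq> y" using mod_eq_neg[OF msup_mod_eq'[OF mod_le_neg[OF py]]] by (simp only: mv_neg_neg)
  finally show ?thesis .
qed

lemma add_modot_assoc_mod:
  assumes n: "\<not> is_one (a \<oplus> b)" and c1: "is_one (b \<oplus> c)"
  shows "(a \<oplus> b) \<odot> c \<doteq> a \<oplus> (b \<odot> c)"
proof -
  have pcb: "neg c \<sqsubseteq> b" using c1 by (simp only: is_one_add_iff')
  have pcab: "neg c \<sqsubseteq> a \<oplus> b" by (rule mod_le_trans[OF pcb mle_imp_mod_le[OF mle_add_left]])
  have e1: "(a \<oplus> b) \<odot> c \<oplus> neg c \<doteq> a \<oplus> b" by (rule msup_mod_eq'[OF pcab])
  have "b \<odot> c \<oplus> neg c \<doteq> b" by (rule msup_mod_eq'[OF pcb])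
  then have "a \<oplus> (b \<odot> c \<oplus> neg c) \<doteq> a \<oplus> b" by (rule mod_eq_add_left)
  then have e2: "a \<oplus> (b \<odot> c) \<oplus> neg c \<doteq> a \<oplus> b" by (simp only: mv_assoc)
  have "(a \<oplus> b) \<odot> c \<oplus> neg c \<doteq> a \<oplus> (b \<odot> c) \<oplus> neg c" using e1 mod_eq_sym[OF e2] by (rule mod_eq_trans)
  moreover have "\<not> is_one ((a \<oplus> b) \<odot> c \<oplus> neg c)" using is_one_cong[OF e1] n by simp
  ultimately show ?thesis by (rule add_cancel_mod)
qed

lemma add_modot_add_mod:
  assumes n1: "\<not> is_one (x \<oplus> y)" and n2: "\<not> is_one (y \<oplus> z)" and c: "is_one (x \<oplus> y \<oplus> z)"
  shows "(x \<oplus> y) \<odot> z \<doteq> x \<odot> (y \<oplus> z)"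
proof -
  have p1: "neg z \<sqsubseteq> x \<oplus> y" using c by (simp only: is_one_add_iff')
  have eL: "(x \<oplus> y) \<odot> z \<oplus> neg z \<doteq> x \<oplus> y" by (rule msup_mod_eq'[OF p1])
  have "is_one (x \<oplus> (y \<oplus> z))" using c by (simp only: mv_assoc)
  then have p2: "neg (y \<oplus> z) \<sqsubseteq> x" by (simp only: is_one_add_iff')
  have eR1: "x \<odot> (y \<oplus> z) \<oplus> neg (y \<oplus> z) \<doteq> x" by (rule msup_mod_eq'[OF p2])
  have p3: "y \<sqsubseteq> neg z" by (rule mod_le_neg_of_not_is_one[OF n2])
  have "neg z \<squnion> y \<doteq> neg z" by (rule msup_mod_eq'[OF p3])
  moreover have "neg z \<squnion> y = neg (y \<oplus> z) \<oplus> y" by (simp only: mv_neg_neg mv_comm[of z y])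
  ultimately have eR2: "neg (y \<oplus> z) \<oplus> y \<doteq> neg z" by simp
  have "x \<odot> (y \<oplus> z) \<oplus> neg z \<doteq> x \<odot> (y \<oplus> z) \<oplus> (neg (y \<oplus> z) \<oplus> y)" by (rule mod_eq_add_left[OF mod_eq_sym[OF eR2]])
  also have "\<dots> = (x \<odot> (y \<oplus> z) \<oplus> neg (y \<oplus> z)) \<oplus> y" by (simp only: mv_assoc)
  also have "\<dots> \<doteq> x \<oplus> y" by (rule mod_eq_add_right[OF eR1])
  also have "\<dots> \<doteq> (x \<oplus> y) \<odot> z \<oplus> neg z" by (rule mod_eq_sym[OF eL])
  finally have "(x \<oplus> y) \<odot> z \<oplus> neg z \<doteq> x \<odot> (y \<oplus> z) \<oplus> neg z" by (rule mod_eq_sym)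
  moreover have "\<not> is_one ((x \<oplus> y) \<odot> z \<oplus> neg z)" using is_one_cong[OF eL] n1 by simp
  ultimately show ?thesis by (rule add_cancel_mod)
qed

lemma add_modot_swap_mod:
  assumes c1: "is_one (x \<oplus> y)" and ny: "\<not> is_one y" and p: "x \<sqsubseteq> z"
  shows "x \<oplus> (y \<odot> z) \<doteq> (x \<odot> y) \<oplus> z"
proof -
  define t where "t = x \<odot> y"
  have pxy: "neg x \<sqsubseteq> y" using c1 by (simp only: is_one_add_iff)
  have "t \<oplus> neg x = y \<squnion> neg x" unfolding t_def by (simp only: mv_comm[of "neg x" "neg y"])
  also have "\<dots> \<doteq> y" by (rule msup_mod_eq'[OF pxy])
  finally have ey: "t \<oplus> neg x \<doteq> y" .
  have nt: "\<not> is_one (t \<oplus> neg x)" using is_one_cong[OF ey] ny by simp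
  have pxz: "is_one (neg x \<oplus> z)" using p by (simp add: is_one_add_iff)
  have "x \<oplus> (y \<odot> z) \<doteq> x \<oplus> ((t \<oplus> neg x) \<odot> z)"
    by (rule mod_eq_add_left, rule mod_eq_modot[OF mod_eq_sym[OF ey] mod_eq_refl])
  also have "\<dots> \<doteq> x \<oplus> (t \<oplus> (neg x \<odot> z))" by (rule mod_eq_add_left[OF add_modot_assoc_mod[OF nt pxz]])
  also have "\<dots> = t \<oplus> (x \<oplus> (neg x \<odot> z))" by (rule mv_left_comm)
  also have "x \<oplus> (neg x \<odot> z) = z \<squnion> x" by (simp add: mv_comm)
  also have "t \<oplus> (z \<squnion> x) \<doteq> t \<oplus> z" by (rule mod_eq_add_left[OF msup_mod_eq'[OF p]])
  finally show ?thesis unfolding t_def .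
qed

lemma modot_add_assoc_mod:
  assumes c1: "is_one (x \<oplus> y)" and c2: "is_one (y \<oplus> z)" and ny: "\<not> is_one y"
  shows "(x \<odot> y) \<oplus> z \<doteq> x \<oplus> (y \<odot> z)"
proof (cases "x \<sqsubseteq> z")
  case True
  show ?thesis by (rule mod_eq_sym[OF add_modot_swap_mod[OF c1 ny True]])
next
  case False
  then have "z \<sqsubseteq> x" using mod_le_total by blast
  moreover have "is_one (z \<oplus> y)" using c2 by (simp only: mv_comm)
  ultimately have "z \<oplus> (y \<odot> x) \<doteq> (z \<odot> y) \<oplus> x" using add_modot_swap_mod ny by blast
  moreover have "z \<oplus> (y \<odot> x) = (x \<odot> y) \<oplus> z" by (simp only: mv_comm)
  moreover have "(z \<odot> y) \<oplus> x = x \<oplus> (y \<odot> z)" by (simp only: mv_comm)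
  ultimately show ?thesis by simp
qed

definition carry :: "'a \<Rightarrow> 'a \<Rightarrow> nat" where "carry x y = (if is_one (x \<oplus> y) then 1 else 0)"
definition fraction :: "'a \<Rightarrow> 'a \<Rightarrow> 'a" where "fraction x y = (if is_one (x \<oplus> y) then x \<odot> y else x \<oplus> y)"

lemma is_one_upward: "is_one x \<Longrightarrow> x \<preceq> y \<Longrightarrow> is_one y" using is_one_mono mle_imp_mod_le by blast

lemma not_is_one_fraction: "\<not> is_one x \<Longrightarrow> \<not> is_one (fraction x y)"
  unfolding fraction_def using is_one_upward[OF _ modot_mle_left] by auto

lemma carry_fraction_assoc_no_carry:
  assumes c1: "\<not> is_one (x \<oplus> y)"
  shows "carry x y + carry (fraction x y) z = carry y z + carry x (fraction y z) \<and>
    fraction (fraction x y) z \<doteq> fraction x (fraction y z)"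
proof (cases "is_one (y \<oplus> z)")
  case d1: False
  show ?thesis
  proof (cases "is_one (x \<oplus> y \<oplus> z)")
    case True
    then have "is_one (x \<oplus> (y \<oplus> z))" by (simp only: mv_assoc)
    then show ?thesis
      using c1 d1 True add_modot_add_mod[OF c1 d1 True] unfolding carry_def fraction_def by simp
  next
    case False
    then have "\<not> is_one (x \<oplus> (y \<oplus> z))" by (simp add: mv_assoc)
    then show ?thesis using c1 d1 False unfolding carry_def fraction_def by (simp add: mv_assoc)
  qed
next
  case d1: True
  have c2: "is_one (x \<oplus> y \<oplus> z)" using is_one_upward[OF d1] by (simp add: mv_assoc)
  have e: "(x \<oplus> y) \<odot> z \<doteq> x \<oplus> (y \<odot> z)" by (rule add_modot_assoc_mod[OF c1 d1])
  have "x \<oplus> (y \<odot> z) \<preceq> x \<oplus> y" by (rule mle_add_mono_left[OF modot_mle_left])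
  then have "\<not> is_one (x \<oplus> (y \<odot> z))" using c1 is_one_upward by blast
  then show ?thesis using c1 d1 c2 e unfolding carry_def fraction_def by simp
qed

lemma carry_fraction_assoc_carry:
  assumes c1: "is_one (x \<oplus> y)" and ny: "\<not> is_one y"
  shows "carry x y + carry (fraction x y) z = carry y z + carry x (fraction y z) \<and>
    fraction (fraction x y) z \<doteq> fraction x (fraction y z)"
proof (cases "is_one (y \<oplus> z)")
  case d1: False
  have d2: "is_one (x \<oplus> (y \<oplus> z))"
    using is_one_upward[OF c1 mle_add[of "x \<oplus> y" z]] by (simp only: mv_assoc)
  have "\<not> is_one (z \<oplus> y)" using d1 by (simp add: mv_comm)
  moreover have "is_one (y \<oplus> x)" using c1 by (simp only: mv_comm[of y x])
  ultimately have "(z \<oplus> y) \<odot> x \<doteq> z \<oplus> (y \<odot> x)" by (rule add_modot_assoc_mod)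
  then have e: "x \<odot> (y \<oplus> z) \<doteq> (x \<odot> y) \<oplus> z" by (simp only: mv_comm)
  have "(x \<odot> y) \<oplus> z \<preceq> y \<oplus> z" by (rule mle_add_mono[OF modot_mle])
  then have "\<not> is_one ((x \<odot> y) \<oplus> z)" using d1 is_one_upward by blast
  then show ?thesis using c1 d1 d2 mod_eq_sym[OF e] unfolding carry_def fraction_def by simp
next
  case d1: True
  have e: "(x \<odot> y) \<oplus> z \<doteq> x \<oplus> (y \<odot> z)" by (rule modot_add_assoc_mod[OF c1 d1 ny])
  have "(x \<odot> y) \<odot> z = x \<odot> (y \<odot> z)" by (simp add: mv_assoc)
  then show ?thesis using c1 d1 e is_one_cong[OF e] unfolding carry_def fraction_def by auto
qed

lemma carry_fraction_assoc:
  assumes "\<not> is_one y"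
  shows "carry x y + carry (fraction x y) z = carry y z + carry x (fraction y z) \<and>
    fraction (fraction x y) z \<doteq> fraction x (fraction y z)"
  using carry_fraction_assoc_no_carry carry_fraction_assoc_carry[OF _ assms] by blast

text \<open>
  A pair \<open>(n, x)\<close> stands for \<open>n + x\<close> in Chang's \<open>\<Gamma>\<close>-group of the quotient chain; it is proper
  when its fractional part \<open>x\<close> is not \<open>1\<close> modulo \<open>m\<close>.
\<close>

definition wadd :: "nat \<times> 'a \<Rightarrow> nat \<times> 'a \<Rightarrow> nat \<times> 'a" where
  "wadd P Q = (fst P + fst Q + carry (snd P) (snd Q), fraction (snd P) (snd Q))"
definition weq :: "nat \<times> 'a \<Rightarrow> nat \<times> 'a \<Rightarrow> bool" where
  "weq P Q \<longleftrightarrow> fst P = fst Q \<and> snd P \<doteq> snd Q"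
definition proper :: "nat \<times> 'a \<Rightarrow> bool" where "proper P \<longleftrightarrow> \<not> is_one (snd P)"

lemma weq_refl[simp]: "weq P P" unfolding weq_def by simp
lemma weq_sym: "weq P Q \<Longrightarrow> weq Q P" unfolding weq_def by (simp add: mod_eq_sym)
lemma weq_trans: "weq P Q \<Longrightarrow> weq Q R \<Longrightarrow> weq P R" unfolding weq_def using mod_eq_trans by auto

lemma carry_cong: "x \<doteq> x' \<Longrightarrow> carry x y = carry x' y"
  unfolding carry_def using is_one_cong[OF mod_eq_add_right] by metis
lemma fraction_cong: "x \<doteq> x' \<Longrightarrow> fraction x y \<doteq> fraction x' y"
  unfolding fraction_def using is_one_cong[OF mod_eq_add_right, of x x' y] mod_eq_modot[OF _ mod_eq_refl] mod_eq_add_right by auto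
lemma carry_comm: "carry x y = carry y x" unfolding carry_def by (simp add: mv_comm)
lemma fraction_comm: "fraction x y = fraction y x" unfolding fraction_def by (simp add: mv_comm)
lemma carry_le: "carry x y \<le> 1" unfolding carry_def by simp

lemma wadd_comm: "wadd P Q = wadd Q P" unfolding wadd_def by (simp add: carry_comm fraction_comm)
lemma wadd_cong: "weq P P' \<Longrightarrow> weq (wadd P Q) (wadd P' Q)"
  unfolding weq_def wadd_def using carry_cong fraction_cong by auto
lemma wadd_cong2: "weq Q Q' \<Longrightarrow> weq (wadd P Q) (wadd P Q')"
  using wadd_cong wadd_comm by metis
lemma proper_wadd: "proper P \<Longrightarrow> proper (wadd P Q)" unfolding proper_def wadd_def using not_is_one_fraction by simp
lemma proper_wadd2: "proper Q \<Longrightarrow> proper (wadd P Q)" using proper_wadd wadd_comm by metis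
lemma wadd_assoc: "proper P \<Longrightarrow> proper Q \<Longrightarrow> proper R \<Longrightarrow> weq (wadd (wadd P Q) R) (wadd P (wadd Q R))"
  unfolding proper_def weq_def wadd_def using carry_fraction_assoc[of "snd Q" "snd P" "snd R"] by simp
lemma proper_zero[simp]: "proper (a, \<zero>)" unfolding proper_def using not_is_one_zero by simp
lemma wadd_zero: "proper P \<Longrightarrow> wadd P (0, \<zero>) = P"
  unfolding proper_def wadd_def carry_def fraction_def by (cases P) simp

lemma wadd_swap:
  assumes "proper W1" "proper W2" "proper W3" "proper W4"
  shows "weq (wadd (wadd W1 W2) (wadd W3 W4)) (wadd (wadd W1 W3) (wadd W2 W4))"
proof -
  have g: "proper (wadd W2 W3)" "proper (wadd W3 W2)" "proper (wadd W1 W2)" "proper (wadd W3 W4)" "proper (wadd W2 W4)"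
    using assms proper_wadd by auto
  have "weq (wadd (wadd W1 W2) (wadd W3 W4)) (wadd W1 (wadd W2 (wadd W3 W4)))"
    using wadd_assoc assms g by blast
  moreover have "weq (wadd W2 (wadd W3 W4)) (wadd (wadd W2 W3) W4)"
    using wadd_assoc assms by (blast intro: weq_sym)
  then have "weq (wadd W1 (wadd W2 (wadd W3 W4))) (wadd W1 (wadd (wadd W2 W3) W4))" by (rule wadd_cong2)
  moreover have "wadd W2 W3 = wadd W3 W2" by (rule wadd_comm)
  moreover have "weq (wadd (wadd W3 W2) W4) (wadd W3 (wadd W2 W4))" using wadd_assoc assms by blast
  then have "weq (wadd W1 (wadd (wadd W3 W2) W4)) (wadd W1 (wadd W3 (wadd W2 W4)))" by (rule wadd_cong2)
  moreover have "weq (wadd W1 (wadd W3 (wadd W2 W4))) (wadd (wadd W1 W3) (wadd W2 W4))"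
    using wadd_assoc assms g by (blast intro: weq_sym)
  ultimately show ?thesis by (metis weq_trans)
qed

fun wmult :: "nat \<Rightarrow> nat \<times> 'a \<Rightarrow> nat \<times> 'a" where
  "wmult 0 P = (0, \<zero>)" | "wmult (Suc n) P = wadd (wmult n P) P"

lemma proper_wmult: "proper P \<Longrightarrow> proper (wmult n P)"
  by (induction n) (auto intro: proper_wadd2)
lemma wmult_add: "proper P \<Longrightarrow> weq (wmult (n + k) P) (wadd (wmult n P) (wmult k P))"
proof (induction k)
  case 0 then show ?case using wadd_zero proper_wmult by simp
next
  case (Suc k)
  have "weq (wadd (wmult (n + k) P) P) (wadd (wadd (wmult n P) (wmult k P)) P)"
    by (rule wadd_cong[OF Suc.IH[OF Suc.prems]])
  moreover have "weq (wadd (wadd (wmult n P) (wmult k P)) P) (wadd (wmult n P) (wadd (wmult k P) P))"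
    using wadd_assoc proper_wmult Suc.prems by blast
  ultimately show ?case by (simp add: weq_trans)
qed
lemma wmult_wadd: "proper P \<Longrightarrow> proper Q \<Longrightarrow> weq (wmult n (wadd P Q)) (wadd (wmult n P) (wmult n Q))"
proof (induction n)
  case 0 then show ?case by (simp add: wadd_zero)
next
  case (Suc n)
  have "weq (wadd (wmult n (wadd P Q)) (wadd P Q)) (wadd (wadd (wmult n P) (wmult n Q)) (wadd P Q))"
    by (rule wadd_cong[OF Suc.IH[OF Suc.prems]])
  moreover have "weq (wadd (wadd (wmult n P) (wmult n Q)) (wadd P Q)) (wadd (wadd (wmult n P) P) (wadd (wmult n Q) Q))"
    using wadd_swap proper_wmult Suc.prems by blast
  ultimately show ?case by (simp add: weq_trans)
qed
lemma wmult_shift: "wmult n (a, x) = (n * a + fst (wmult n (0, x)), snd (wmult n (0, x)))"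
  by (induction n) (simp_all add: wadd_def)

definition int_part :: "nat \<Rightarrow> 'a \<Rightarrow> nat" where "int_part n x = fst (wmult n (0, x))"

lemma int_part_Suc: "int_part n x \<le> int_part (Suc n) x \<and> int_part (Suc n) x \<le> int_part n x + 1"
  unfolding int_part_def using carry_le by (simp add: wadd_def)
lemma int_part_mono: "n \<le> k \<Longrightarrow> int_part n x \<le> int_part k x"
  by (induction k) (auto simp: le_Suc_eq intro: le_trans[OF _ conjunct1[OF int_part_Suc]])
lemma int_part_le: "int_part n x \<le> n"
proof (induction n)
  case 0 then show ?case by (simp add: int_part_def)
next
  case (Suc n) then show ?case using int_part_Suc[of n x] by simp
qed
lemma int_part_double: "\<not> is_one x \<Longrightarrow> 2 * int_part n x \<le> int_part (2 * n) x \<and> int_part (2 * n) x \<le> 2 * int_part n x + 1"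
proof -
  assume "\<not> is_one x"
  then have g: "proper (0, x)" unfolding proper_def by simp
  have "weq (wmult (n + n) (0, x)) (wadd (wmult n (0, x)) (wmult n (0, x)))" by (rule wmult_add[OF g])
  then have "int_part (n + n) x = int_part n x + int_part n x + carry (snd (wmult n (0, x))) (snd (wmult n (0, x)))"
    unfolding weq_def wadd_def int_part_def by simp
  then show ?thesis using carry_le by (simp add: mult_2)
qed
lemma int_part_add:
  assumes "\<not> is_one x" "\<not> is_one y" "\<not> is_one (x \<oplus> y)"
  shows "int_part n x + int_part n y \<le> int_part n (x \<oplus> y) \<and> int_part n (x \<oplus> y) \<le> int_part n x + int_part n y + 1"
proof -
  have e: "wadd (0, x) (0, y) = (0, x \<oplus> y)" using assms(3) unfolding wadd_def carry_def fraction_def by simp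
  have "weq (wmult n (wadd (0, x) (0, y))) (wadd (wmult n (0, x)) (wmult n (0, y)))"
    by (rule wmult_wadd) (use assms in \<open>simp_all add: proper_def\<close>)
  then have "weq (wmult n (0, x \<oplus> y)) (wadd (wmult n (0, x)) (wmult n (0, y)))" unfolding e .
  then have "int_part n (x \<oplus> y) = int_part n x + int_part n y + carry (snd (wmult n (0, x))) (snd (wmult n (0, y)))"
    unfolding weq_def wadd_def int_part_def by simp
  then show ?thesis using carry_le by simp
qed
lemma int_part_carry:
  assumes "\<not> is_one x" "\<not> is_one y" "is_one (x \<oplus> y)"
  shows "n \<le> int_part n x + int_part n y + 1"
proof -
  have e: "wadd (0, x) (0, y) = (1, x \<odot> y)" using assms(3) unfolding wadd_def carry_def fraction_def by simp
  have "weq (wmult n (wadd (0, x) (0, y))) (wadd (wmult n (0, x)) (wmult n (0, y)))"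
    by (rule wmult_wadd) (use assms in \<open>simp_all add: proper_def\<close>)
  then have "weq (wmult n (1, x \<odot> y)) (wadd (wmult n (0, x)) (wmult n (0, y)))" unfolding e .
  then have "n + int_part n (x \<odot> y) = int_part n x + int_part n y + carry (snd (wmult n (0, x))) (snd (wmult n (0, y)))"
    unfolding weq_def wadd_def int_part_def using wmult_shift[of n 1 "x \<odot> y"] by simp
  then show ?thesis using carry_le[of "snd (wmult n (0, x))" "snd (wmult n (0, y))"] by linarith
qed
lemma not_is_one_of_mem: "u \<in> m \<Longrightarrow> \<not> is_one u"
  unfolding is_one_def using mem_add[of u "neg u"] by auto
lemma wmult_mem: "x \<in> m \<Longrightarrow> fst (wmult n (0, x)) = 0 \<and> snd (wmult n (0, x)) \<in> m"
proof (induction n)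
  case 0 then show ?case by simp
next
  case (Suc n)
  then have "snd (wmult n (0, x)) \<oplus> x \<in> m" using mem_add by blast
  then show ?case using Suc not_is_one_of_mem by (simp add: wadd_def carry_def fraction_def)
qed
lemma int_part_mem: "x \<in> m \<Longrightarrow> int_part n x = 0" unfolding int_part_def using wmult_mem by blast
lemma wmult_of_int_part_zero: "int_part n x = 0 \<Longrightarrow> wmult n (0, x) = (0, nmult n x)"
proof (induction n)
  case 0 then show ?case by simp
next
  case (Suc n)
  have "int_part n x = 0" using Suc.prems int_part_Suc[of n x] by simp
  then have e: "wmult n (0, x) = (0, nmult n x)" by (rule Suc.IH)
  then have "carry (nmult n x) x = 0" using Suc.prems unfolding int_part_def by (simp add: wadd_def)
  then show ?case using e by (simp add: wadd_def carry_def fraction_def split: if_splits)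
qed
lemma int_part_pos: "x \<notin> m \<Longrightarrow> \<not> is_one x \<Longrightarrow> \<exists>n. 1 \<le> int_part n x"
proof (rule ccontr)
  assume a: "x \<notin> m" "\<not> is_one x" "\<not> (\<exists>n. 1 \<le> int_part n x)"
  obtain z n where z: "z \<in> m" "z \<oplus> nmult n x = \<one>" using ex_nmult_eq_one_if_not_mem[OF a(1)] by blast
  have "neg (nmult n x) \<preceq> z" using z(2) by (simp add: mv_comm)
  then have "is_one (nmult n x)" unfolding is_one_def using z(1) mem_downward by blast
  moreover have "int_part n x = 0" using a(3) by (metis One_nat_def not_less_eq_eq le0 le_antisym)
  then have "proper (0, nmult n x)" using proper_wmult[of "(0, x)" n] a(2) wmult_of_int_part_zero by (simp add: proper_def)
  ultimately show False by (simp add: proper_def)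
qed
lemma int_part_neg:
  assumes "\<not> is_one x" "\<not> is_one (neg x)"
  shows "n \<le> int_part n x + int_part n (neg x) + 1 \<and> int_part n x + int_part n (neg x) \<le> n"
proof -
  have e: "wadd (0, x) (0, neg x) = (1, \<zero>)" unfolding wadd_def carry_def fraction_def is_one_def by simp
  have "weq (wmult n (wadd (0, x) (0, neg x))) (wadd (wmult n (0, x)) (wmult n (0, neg x)))"
    by (rule wmult_wadd) (use assms in \<open>simp_all add: proper_def\<close>)
  then have "weq (wmult n (1, \<zero>)) (wadd (wmult n (0, x)) (wmult n (0, neg x)))" unfolding e .
  then have "n + int_part n \<zero> = int_part n x + int_part n (neg x) + carry (snd (wmult n (0, x))) (snd (wmult n (0, neg x)))"
    unfolding weq_def wadd_def int_part_def using wmult_shift[of n 1 \<zero>] by simp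
  moreover have "int_part n \<zero> = 0" by (rule int_part_mem) simp
  ultimately show ?thesis using carry_le[of "snd (wmult n (0, x))" "snd (wmult n (0, neg x))"] by linarith
qed

end

lemma eq_of_abs_diff_le_pow2:
  fixes p q c :: real
  assumes "\<forall>k::nat. \<bar>p - q\<bar> \<le> c / 2 ^ k"
  shows "p = q"
proof (rule ccontr)
  assume "p \<noteq> q"
  then have d: "\<bar>p - q\<bar> > 0" by simp
  have c0: "c \<ge> 0" using assms[rule_format, of 0] by simp
  obtain k where k: "(1/2::real) ^ k < \<bar>p - q\<bar> / (c + 1)"
    using real_arch_pow_inv[of "\<bar>p - q\<bar> / (c + 1)" "1/2"] d c0 by auto
  have "c / 2 ^ k \<le> (c + 1) * (1/2) ^ k" using c0 by (simp add: power_one_over field_simps)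
  also have "\<dots> < \<bar>p - q\<bar>" using k c0 by (simp add: field_simps)
  finally show False using assms[rule_format, of k] by simp
qed

lemma nonpos_of_le_inverse_pow2:
  fixes t :: real
  assumes "\<forall>k::nat. t \<le> 1 / 2 ^ k"
  shows "t \<le> 0"
proof (rule ccontr)
  assume "\<not> t \<le> 0"
  then have d: "t > 0" by simp
  obtain k where k: "(1/2::real) ^ k < t"
    using real_arch_pow_inv[of t "1/2"] d by auto
  then show False using assms[rule_format, of k] by (simp add: power_one_over)
qed

context max_ideal begin

definition dyadic :: "nat \<Rightarrow> 'a \<Rightarrow> real" where "dyadic k x = real (int_part (2 ^ k) x) / 2 ^ k"

text \<open>Elements that are \<open>1\<close> modulo \<open>m\<close> are set aside: on pairs with such a fractional part the
  \<open>\<Gamma>\<close>-group addition is not associative.\<close>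
definition qval :: "'a \<Rightarrow> real" where "qval x = (if is_one x then 1 else (SUP k. dyadic k x))"

lemma dyadic_nonneg: "0 \<le> dyadic k x" unfolding dyadic_def by simp
lemma dyadic_le_one: "dyadic k x \<le> 1" unfolding dyadic_def using int_part_le[of "2 ^ k" x] by (simp add: field_simps)
lemma dyadic_Suc: "\<not> is_one x \<Longrightarrow> dyadic k x \<le> dyadic (Suc k) x \<and> dyadic (Suc k) x \<le> dyadic k x + 1 / 2 ^ Suc k"
proof -
  assume "\<not> is_one x"
  from int_part_double[OF this, of "2 ^ k"]
  have a: "real (2 * int_part (2 ^ k) x) \<le> real (int_part (2 ^ Suc k) x)"
    and b: "real (int_part (2 ^ Suc k) x) \<le> real (2 * int_part (2 ^ k) x + 1)" by simp_all
  show ?thesis unfolding dyadic_def using a b by (simp add: field_simps)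
qed
lemma dyadic_incseq: "\<not> is_one x \<Longrightarrow> incseq (\<lambda>k. dyadic k x)"
  using dyadic_Suc by (simp add: incseq_SucI)
lemma dyadic_upper_decseq: "\<not> is_one x \<Longrightarrow> decseq (\<lambda>k. dyadic k x + 1 / 2 ^ k)"
proof (rule decseq_SucI)
  fix k assume "\<not> is_one x"
  then have "dyadic (Suc k) x \<le> dyadic k x + 1 / 2 ^ Suc k" using dyadic_Suc by blast
  then show "dyadic (Suc k) x + 1 / 2 ^ Suc k \<le> dyadic k x + 1 / 2 ^ k" by simp
qed
lemma dyadic_le_upper: "\<not> is_one x \<Longrightarrow> dyadic j x \<le> dyadic k x + 1 / 2 ^ k"
proof (cases "j \<le> k")
  case True
  assume "\<not> is_one x"
  then have "dyadic j x \<le> dyadic k x" using dyadic_incseq True by (simp add: incseq_def)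
  moreover have "(0::real) \<le> 1 / 2 ^ k" by simp
  ultimately show ?thesis by linarith
next
  case False
  assume n: "\<not> is_one x"
  then have "dyadic j x + 1 / 2 ^ j \<le> dyadic k x + 1 / 2 ^ k" using dyadic_upper_decseq[OF n] False by (simp add: decseq_def)
  moreover have "(0::real) \<le> 1 / 2 ^ j" by simp
  ultimately show ?thesis by linarith
qed
lemma qval_bounds: "\<not> is_one x \<Longrightarrow> dyadic k x \<le> qval x \<and> qval x \<le> dyadic k x + 1 / 2 ^ k"
proof -
  assume n: "\<not> is_one x"
  have bdd: "bdd_above (range (\<lambda>k. dyadic k x))" by (rule bdd_aboveI[where M=1]) (auto simp: dyadic_le_one)
  have "dyadic k x \<le> (SUP k. dyadic k x)" by (rule cSUP_upper[OF _ bdd]) simp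
  moreover have "(SUP k. dyadic k x) \<le> dyadic k x + 1 / 2 ^ k" by (rule cSUP_least) (auto intro: dyadic_le_upper[OF n])
  ultimately show ?thesis using n unfolding qval_def by simp
qed
lemma qval_range: "0 \<le> qval x \<and> qval x \<le> 1"
proof (cases "is_one x")
  case True then show ?thesis unfolding qval_def by simp
next
  case False
  have "0 \<le> qval x" using qval_bounds[OF False, of 0] dyadic_nonneg[of 0 x] by linarith
  moreover have "qval x \<le> 1"
    unfolding qval_def using False by (simp add: cSUP_least dyadic_le_one)
  ultimately show ?thesis by simp
qed
lemma qval_mem: "x \<in> m \<Longrightarrow> qval x = 0"
  unfolding qval_def dyadic_def using not_is_one_of_mem int_part_mem by simp
lemma qval_pos: "x \<notin> m \<Longrightarrow> 0 < qval x"
proof (cases "is_one x")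
  case True then show ?thesis unfolding qval_def by simp
next
  case False
  assume xm: "x \<notin> m"
  obtain n where n: "1 \<le> int_part n x" using int_part_pos[OF xm False] by blast
  have "n \<le> 2 ^ n" by (simp add: less_imp_le)
  then have "1 \<le> int_part (2 ^ n) x" using int_part_mono n by (meson le_trans)
  then have "0 < dyadic n x" unfolding dyadic_def by simp
  then show ?thesis using qval_bounds[OF False, of n] by linarith
qed
lemma qval_add_no_carry:
  assumes nx: "\<not> is_one x" and ny: "\<not> is_one y" and nxy: "\<not> is_one (x \<oplus> y)"
  shows "qval (x \<oplus> y) = qval x + qval y"
proof -
  have "\<forall>k::nat. \<bar>qval (x \<oplus> y) - (qval x + qval y)\<bar> \<le> 3 / 2 ^ k"
  proof
    fix k :: nat
    have q: "real (int_part (2^k) x) + real (int_part (2^k) y) \<le> real (int_part (2^k) (x \<oplus> y))"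
      "real (int_part (2^k) (x \<oplus> y)) \<le> real (int_part (2^k) x) + real (int_part (2^k) y) + 1"
      using int_part_add[OF nx ny nxy, of "2^k"] by linarith+
    have a: "dyadic k x + dyadic k y \<le> dyadic k (x \<oplus> y)" "dyadic k (x \<oplus> y) \<le> dyadic k x + dyadic k y + 1 / 2 ^ k"
      using divide_right_mono[OF q(1), of "2^k"] divide_right_mono[OF q(2), of "2^k"]
      unfolding dyadic_def by (simp_all add: add_divide_distrib)
    show "\<bar>qval (x \<oplus> y) - (qval x + qval y)\<bar> \<le> 3 / 2 ^ k"
      using a qval_bounds[OF nx, of k] qval_bounds[OF ny, of k] qval_bounds[OF nxy, of k] by (simp add: abs_le_iff)
  qed
  then show ?thesis by (rule eq_of_abs_diff_le_pow2)
qed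
lemma qval_add_carry:
  assumes nx: "\<not> is_one x" and ny: "\<not> is_one y" and cxy: "is_one (x \<oplus> y)"
  shows "1 \<le> qval x + qval y"
proof -
  have "\<forall>k::nat. 1 - (qval x + qval y) \<le> 1 / 2 ^ k"
  proof
    fix k :: nat
    have q: "real (2^k) \<le> real (int_part (2^k) x) + real (int_part (2^k) y) + 1"
      using int_part_carry[OF nx ny cxy, of "2^k"] by linarith
    then have "real (2^k) / 2^k \<le> (real (int_part (2^k) x) + real (int_part (2^k) y) + 1) / 2^k"
      by (rule divide_right_mono) simp
    then have "1 - 1 / 2 ^ k \<le> dyadic k x + dyadic k y"
      unfolding dyadic_def by (simp add: add_divide_distrib)
    then show "1 - (qval x + qval y) \<le> 1 / 2 ^ k"
      using qval_bounds[OF nx, of k] qval_bounds[OF ny, of k] by linarith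
  qed
  then show ?thesis using nonpos_of_le_inverse_pow2 by fastforce
qed
lemma qval_add_qval_neg:
  assumes nx: "\<not> is_one x" and nnx: "\<not> is_one (neg x)"
  shows "qval x + qval (neg x) = 1"
proof -
  have "\<forall>k::nat. \<bar>qval x + qval (neg x) - 1\<bar> \<le> 2 / 2 ^ k"
  proof
    fix k :: nat
    have q: "real (2^k) \<le> real (int_part (2^k) x) + real (int_part (2^k) (neg x)) + 1"
      "real (int_part (2^k) x) + real (int_part (2^k) (neg x)) \<le> real (2^k)"
      using int_part_neg[OF nx nnx, of "2^k"] by linarith+
    have a: "1 - 1 / 2 ^ k \<le> dyadic k x + dyadic k (neg x)" "dyadic k x + dyadic k (neg x) \<le> 1"
      using divide_right_mono[OF q(1), of "2^k"] divide_right_mono[OF q(2), of "2^k"]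
      unfolding dyadic_def by (simp_all add: add_divide_distrib)
    show "\<bar>qval x + qval (neg x) - 1\<bar> \<le> 2 / 2 ^ k"
      using a qval_bounds[OF nx, of k] qval_bounds[OF nnx, of k] by (simp add: abs_le_iff)
  qed
  then show ?thesis using eq_of_abs_diff_le_pow2 by fastforce
qed

lemma qval_add: "qval (x \<oplus> y) = min 1 (qval x + qval y)"
proof (cases "is_one x \<or> is_one y")
  case True
  then have "is_one (x \<oplus> y)" using is_one_upward mle_add mle_add_left by blast
  then have "qval (x \<oplus> y) = 1" unfolding qval_def by simp
  moreover have "1 \<le> qval x + qval y" using True qval_range[of x] qval_range[of y] unfolding qval_def by auto
  ultimately show ?thesis by simp
next
  case False
  then have nx: "\<not> is_one x" and ny: "\<not> is_one y" by auto
  show ?thesis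
  proof (cases "is_one (x \<oplus> y)")
    case True
    then show ?thesis using qval_add_carry[OF nx ny True] unfolding qval_def by simp
  next
    case False
    then show ?thesis using qval_add_no_carry[OF nx ny False] qval_range[of "x \<oplus> y"] by simp
  qed
qed

lemma qval_neg: "qval (neg x) = 1 - qval x"
proof (cases "is_one x \<or> is_one (neg x)")
  case True
  then have "neg x \<in> m \<and> qval x = 1 \<or> x \<in> m \<and> qval (neg x) = 1" unfolding is_one_def qval_def by auto
  then show ?thesis using qval_mem by auto
next
  case False
  then show ?thesis using qval_add_qval_neg[of x] by simp
qed

lemma mv_hom_unit_qval: "mv_hom_unit A qval"
  unfolding mv_hom_unit_def using qval_range qval_mem[OF zero_mem] qval_add qval_neg by blast

lemma qval_kernel: "{x. qval x = 0} = m"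
  using qval_mem qval_pos by force

lemma ex_hom_with_kernel: "\<exists>h. mv_hom_unit A h \<and> {x. h x = 0} = m"
  using mv_hom_unit_qval qval_kernel by blast

end

fun dbl :: "bool list \<Rightarrow> real \<Rightarrow> real" where
  "dbl [] t = t"
| "dbl (b # w) t = dbl w (if b then max 0 (2 * t - 1) else min 1 (2 * t))"

lemma dbl_mono: "s \<le> t \<Longrightarrow> dbl w s \<le> dbl w t"
proof (induction w arbitrary: s t)
  case Nil then show ?case by simp
next
  case (Cons b w)
  show ?case unfolding dbl.simps
    by (rule Cons.IH) (use Cons.prems in \<open>auto simp: max_def min_def\<close>)
qed

text \<open>While \<open>a\<close> and \<open>b\<close> lie on the same side of \<open>1/2\<close> one step doubles their distance;
  once \<open>1/2\<close> separates them, the step \<open>t \<mapsto> max 0 (2t - 1)\<close> sends \<open>a\<close> to \<open>0\<close> and \<open>b\<close> above it.\<close>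
lemma dbl_separates_aux: "\<forall>a b. 0 \<le> a \<and> a < b \<and> b \<le> 1 \<and> 1 < (b - a) * 2 ^ n \<longrightarrow> (\<exists>w. dbl w a = 0 \<and> 0 < dbl w b)"
proof (induction n)
  case 0 then show ?case by auto
next
  case (Suc n)
  show ?case
  proof (intro allI impI)
    fix a b :: real
    assume h: "0 \<le> a \<and> a < b \<and> b \<le> 1 \<and> 1 < (b - a) * 2 ^ Suc n"
    show "\<exists>w. dbl w a = 0 \<and> 0 < dbl w b"
    proof (cases "b \<le> 1/2")
      case True
      have "1 < (2 * b - 2 * a) * 2 ^ n" using h by (simp add: algebra_simps)
      then have "\<exists>w. dbl w (2 * a) = 0 \<and> 0 < dbl w (2 * b)"
        by (intro Suc.IH[rule_format]) (use h True in auto)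
      then obtain w where w: "dbl w (2 * a) = 0" "0 < dbl w (2 * b)" by blast
      have m: "min 1 (2 * a) = 2 * a" "min 1 (2 * b) = 2 * b" using h True by auto
      have "dbl (False # w) a = 0" "0 < dbl (False # w) b" using w by (simp_all only: dbl.simps m if_False)
      then show ?thesis by blast
    next
      case nb: False
      show ?thesis
      proof (cases "1/2 \<le> a")
        case True
        have "1 < ((2 * b - 1) - (2 * a - 1)) * 2 ^ n" using h by (simp add: algebra_simps)
        then have "\<exists>w. dbl w (2 * a - 1) = 0 \<and> 0 < dbl w (2 * b - 1)"
          by (intro Suc.IH[rule_format]) (use h True in auto)
        then obtain w where w: "dbl w (2 * a - 1) = 0" "0 < dbl w (2 * b - 1)" by blast
        have m: "max 0 (2 * a - 1) = 2 * a - 1" "max 0 (2 * b - 1) = 2 * b - 1" using h True by auto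
        have "dbl (True # w) a = 0" "0 < dbl (True # w) b" using w by (simp_all only: dbl.simps m if_True)
        then show ?thesis by blast
      next
        case False
        have "dbl [True] a = 0" "0 < dbl [True] b" using nb False by (simp_all add: max_def)
        then show ?thesis by blast
      qed
    qed
  qed
qed

lemma dbl_separates: "0 \<le> a \<Longrightarrow> a < b \<Longrightarrow> b \<le> 1 \<Longrightarrow> \<exists>w. dbl w a = 0 \<and> 0 < dbl w b"
proof -
  assume h: "0 \<le> a" "a < b" "b \<le> 1"
  obtain n where "1 / (b - a) < 2 ^ n" using real_arch_pow[of 2 "1 / (b - a)"] by auto
  then have "1 < (b - a) * 2 ^ n" using h by (simp add: field_simps)
  then show ?thesis using dbl_separates_aux h by blast
qed

context mv_alg begin

fun mdbl :: "bool list \<Rightarrow> 'a \<Rightarrow> 'a" where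
  "mdbl [] x = x"
| "mdbl (b # w) x = mdbl w (if b then x \<odot> x else x \<oplus> x)"

lemma hom_madd: "mv_hom_unit A h \<Longrightarrow> h (x \<oplus> y) = min 1 (h x + h y)" unfolding mv_hom_unit_def by blast
lemma hom_neg: "mv_hom_unit A h \<Longrightarrow> h (neg x) = 1 - h x" unfolding mv_hom_unit_def by blast
lemma hom_range: "mv_hom_unit A h \<Longrightarrow> 0 \<le> h x \<and> h x \<le> 1" unfolding mv_hom_unit_def by blast
lemma hom_zero: "mv_hom_unit A h \<Longrightarrow> h \<zero> = 0" unfolding mv_hom_unit_def by blast
lemma hom_modot: "mv_hom_unit A h \<Longrightarrow> h (x \<odot> y) = max 0 (h x + h y - 1)"
  by (simp add: hom_madd hom_neg min_def max_def)

lemma hom_mdbl: "mv_hom_unit A h \<Longrightarrow> h (mdbl w x) = dbl w (h x)"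
proof (induction w arbitrary: x)
  case Nil then show ?case by simp
next
  case (Cons b w)
  have e: "h (if b then x \<odot> x else x \<oplus> x) = (if b then max 0 (2 * h x - 1) else min 1 (2 * h x))"
    using hom_modot[OF Cons.prems, of x x] hom_madd[OF Cons.prems, of x x]
    by (cases b) (simp_all only: if_True if_False mult_2)
  have "h (mdbl (b # w) x) = dbl w (h (if b then x \<odot> x else x \<oplus> x))"
    unfolding mdbl.simps by (rule Cons.IH[OF Cons.prems])
  then show ?case unfolding e dbl.simps .
qed

lemma hom_kernels_differ_if_less:
  assumes h1: "mv_hom_unit A h1" and h2: "mv_hom_unit A h2" and less: "h1 x < h2 x"
  shows "\<exists>y. h1 y = 0 \<and> h2 y \<noteq> 0"
proof -
  obtain w where "dbl w (h1 x) = 0" "0 < dbl w (h2 x)"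
    using dbl_separates[OF _ less] hom_range[OF h1] hom_range[OF h2] by blast
  then show ?thesis using hom_mdbl[OF h1] hom_mdbl[OF h2] by (metis less_irrefl)
qed

lemma hom_eq_if_kernel_eq:
  assumes h1: "mv_hom_unit A h1" and h2: "mv_hom_unit A h2"
    and kernel: "{x. h1 x = 0} = {x. h2 x = 0}"
  shows "h1 = h2"
proof (rule ext, rule ccontr)
  fix x assume "h1 x \<noteq> h2 x"
  then consider "h1 x < h2 x" | "h2 x < h1 x" by linarith
  then show False
    using hom_kernels_differ_if_less[OF h1 h2] hom_kernels_differ_if_less[OF h2 h1] kernel
    by cases blast+
qed

definition hom_of :: "'a set \<Rightarrow> 'a \<Rightarrow> real" where
  "hom_of I = (THE h. mv_hom_unit A h \<and> {x. h x = 0} = I)"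

lemma hom_of_kernel:
  assumes "I \<in> MaxSpec A"
  shows "mv_hom_unit A (hom_of I) \<and> {x. hom_of I x = 0} = I"
proof -
  have "max_ideal A I" unfolding max_ideal_def max_ideal_axioms_def using mv_alg_axioms assms by (simp add: MaxSpec_def)
  then have ex: "\<exists>h. mv_hom_unit A h \<and> {x. h x = 0} = I" by (rule max_ideal.ex_hom_with_kernel)
  have "\<exists>!h. mv_hom_unit A h \<and> {x. h x = 0} = I"
    using ex hom_eq_if_kernel_eq by blast
  then show ?thesis unfolding hom_of_def by (rule theI')
qed

lemma mv_hom_unit_hom_of: "I \<in> MaxSpec A \<Longrightarrow> mv_hom_unit A (hom_of I)"
  using hom_of_kernel by blast

lemma hom_of_eq_zero_iff: "I \<in> MaxSpec A \<Longrightarrow> hom_of I x = 0 \<longleftrightarrow> x \<in> I"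
  using hom_of_kernel by blast

lemma mv_star_eq_hom_of: "mv_star A b I = hom_of I b" unfolding mv_star_def hom_of_def by simp

lemma topspace_MaxTop: "topspace (MaxTop A) = MaxSpec A" unfolding MaxTop_def by auto

lemma openin_MaxTop_basic: "openin (MaxTop A) {I \<in> MaxSpec A. a \<notin> I}"
  unfolding MaxTop_def by (rule topology_generated_by_Basis) blast

lemma hom_of_gt_neighbourhood:
  assumes I0: "I0 \<in> MaxSpec A" and r: "0 \<le> r" "r < hom_of I0 b"
  shows "\<exists>w. mdbl w b \<notin> I0 \<and> (\<forall>I \<in> MaxSpec A. mdbl w b \<notin> I \<longrightarrow> r < hom_of I b)"
proof -
  have h0: "mv_hom_unit A (hom_of I0)" by (rule mv_hom_unit_hom_of[OF I0])
  obtain w where w: "dbl w r = 0" "0 < dbl w (hom_of I0 b)"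
    using dbl_separates[OF r] hom_range[OF h0, of b] by blast
  have "hom_of I0 (mdbl w b) \<noteq> 0" using w(2) hom_mdbl[OF h0] by simp
  then have "mdbl w b \<notin> I0" using hom_of_eq_zero_iff[OF I0] by blast
  moreover have "r < hom_of I b" if I: "I \<in> MaxSpec A" "mdbl w b \<notin> I" for I
  proof -
    have h: "mv_hom_unit A (hom_of I)" by (rule mv_hom_unit_hom_of[OF I(1)])
    have "hom_of I (mdbl w b) \<noteq> 0" using I hom_of_eq_zero_iff by blast
    then have "0 < dbl w (hom_of I b)"
      using hom_mdbl[OF h] hom_range[OF h, of "mdbl w b"] by simp
    then show "r < hom_of I b" using dbl_mono[of "hom_of I b" r w] w(1) by linarith
  qed
  ultimately show ?thesis by blast
qed

lemma openin_MaxTop_hom_of_gt: "openin (MaxTop A) {I \<in> topspace (MaxTop A). r < hom_of I b}"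
proof (cases "r < 0")
  case True
  have "r < hom_of I b" if "I \<in> topspace (MaxTop A)" for I
    using that True hom_range[OF mv_hom_unit_hom_of, of I b] by (simp add: topspace_MaxTop)
  then have "{I \<in> topspace (MaxTop A). r < hom_of I b} = topspace (MaxTop A)" by blast
  then show ?thesis by simp
next
  case False
  show ?thesis
  proof (subst openin_subopen, intro ballI)
    fix I0 assume "I0 \<in> {I \<in> topspace (MaxTop A). r < hom_of I b}"
    then have I0: "I0 \<in> MaxSpec A" "r < hom_of I0 b" by (auto simp: topspace_MaxTop)
    have "0 \<le> r" using False by simp
    then obtain w where w: "mdbl w b \<notin> I0"
      and w_gt: "\<forall>I \<in> MaxSpec A. mdbl w b \<notin> I \<longrightarrow> r < hom_of I b"
      using hom_of_gt_neighbourhood[OF I0(1) _ I0(2)] by blast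
    define T where "T = {I \<in> MaxSpec A. mdbl w b \<notin> I}"
    have "openin (MaxTop A) T" unfolding T_def by (rule openin_MaxTop_basic)
    moreover have "I0 \<in> T" unfolding T_def using I0(1) w by blast
    moreover have "T \<subseteq> {I \<in> topspace (MaxTop A). r < hom_of I b}"
      unfolding T_def topspace_MaxTop using w_gt by blast
    ultimately show "\<exists>T. openin (MaxTop A) T \<and> I0 \<in> T \<and> T \<subseteq> {I \<in> topspace (MaxTop A). r < hom_of I b}"
      by blast
  qed
qed

lemma continuous_map_hom_of: "continuous_map (MaxTop A) euclidean (\<lambda>I. hom_of I b)"
  unfolding continuous_map_upper_lower_semicontinuous_lt
proof (intro conjI allI)
  fix r
  show "openin (MaxTop A) {I \<in> topspace (MaxTop A). r < hom_of I b}"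
    by (rule openin_MaxTop_hom_of_gt)
  have "hom_of I b < r \<longleftrightarrow> 1 - r < hom_of I (neg b)" if "I \<in> topspace (MaxTop A)" for I
    using that hom_neg[OF mv_hom_unit_hom_of, of I b] by (simp add: topspace_MaxTop)
  then have "{I \<in> topspace (MaxTop A). hom_of I b < r} = {I \<in> topspace (MaxTop A). 1 - r < hom_of I (neg b)}"
    by blast
  then show "openin (MaxTop A) {I \<in> topspace (MaxTop A). hom_of I b < r}"
    using openin_MaxTop_hom_of_gt by simp
qed

lemma dual_eq_hom_of: "I \<in> MaxSpec A \<Longrightarrow> dual A p I = (\<lambda>a. hom_of I (p a))"
  unfolding dual_def by (simp add: mv_star_eq_hom_of)

lemma continuous_map_dual: "continuous_map (MaxTop A) euclidean (dual A p)"
proof -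
  have "continuous_map (MaxTop A) euclidean (\<lambda>I a. hom_of I (p a))"
    unfolding euclidean_product_topology[symmetric] continuous_map_componentwise_UNIV
    using continuous_map_hom_of by blast
  then show ?thesis
    by (rule continuous_map_eq) (simp add: dual_eq_hom_of topspace_MaxTop)
qed

lemma eq_if_hom_of_eq:
  assumes "semisimple A" and hom_eq: "\<And>I. I \<in> MaxSpec A \<Longrightarrow> hom_of I x = hom_of I y"
  shows "x = y"
proof -
  define u where "u = x \<odot> neg y"
  define v where "v = y \<odot> neg x"
  have "u \<oplus> v \<in> \<Inter> (MaxSpec A)"
  proof
    fix I assume I: "I \<in> MaxSpec A"
    have h: "mv_hom_unit A (hom_of I)" by (rule mv_hom_unit_hom_of[OF I])
    have "hom_of I (u \<oplus> v) = 0"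
      unfolding u_def v_def using hom_eq[OF I] hom_madd[OF h] hom_modot[OF h] hom_neg[OF h] by simp
    then show "u \<oplus> v \<in> I" using hom_of_eq_zero_iff[OF I] by blast
  qed
  then have uv: "u \<oplus> v = \<zero>" using assms(1) unfolding semisimple_def by blast
  have "u = \<zero>" by (rule mle_zero_eq[OF mle_add[of u v, unfolded uv]])
  moreover have "v = \<zero>" by (rule mle_zero_eq[OF mle_add_left[of v u, unfolded uv]])
  ultimately have "x \<preceq> y" and "y \<preceq> x" unfolding u_def v_def by (simp_all only: mle_iff_modot_neg)
  then show "x = y" by (rule mle_antisym)
qed

lemma inj_dual_if_semisimple:
  assumes "semisimple A"
  shows "inj (dual A)"
proof (rule injI, rule ext)
  fix p q a assume "dual A p = dual A q"
  then have "hom_of I (p a) = hom_of I (q a)" if "I \<in> MaxSpec A" for I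
    using dual_eq_hom_of[OF that] by (metis)
  then show "p a = q a" by (rule eq_if_hom_of_eq[OF assms])
qed

lemma hom_mono:
  assumes h: "mv_hom_unit A h" and "x \<preceq> y"
  shows "h x \<le> h y"
proof -
  obtain c where "x \<oplus> c = y" using mle_iff_ex_add[THEN iffD1, OF assms(2)] by blast
  then show ?thesis using hom_madd[OF h, of x c] hom_range[OF h, of c] hom_range[OF h, of x] by auto
qed

end

lemma prob_map_mono:
  assumes "mv_algebra M" "mv_algebra N" "prob_map M N p" and "mv_le M x y"
  shows "mv_le N (p x) (p y)"
proof -
  have M: "mv_alg M" and N: "mv_alg N" using assms(1,2) by (simp_all add: mv_alg_def)
  obtain c where "y = mv_add M x c"
    using assms(4) mv_alg.mle_iff_ex_add[OF M] by (auto simp: mv_le_def mv_one_def)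
  then have "p y = mv_add N (p x) (p (mv_inf M c (mv_neg M x)))"
    using assms(3) unfolding prob_map_def by blast
  then show ?thesis using mv_alg.mle_add[OF N] by (simp add: mv_le_def mv_one_def)
qed

lemma mv_state_hom_comp_prob_map:
  assumes "mv_algebra M" and "mv_algebra N" and p: "prob_map M N p" and h: "mv_hom_unit N h"
  shows "mv_state M (\<lambda>a. h (p a))"
  unfolding mv_state_def
proof (intro conjI allI impI)
  have M: "mv_alg M" and N: "mv_alg N" using assms(1,2) by (simp_all add: mv_alg_def)
  fix a b
  show "0 \<le> h (p a)" "h (p a) \<le> 1" using mv_alg.hom_range[OF N h] by auto
  have "p (mv_one M) = mv_one N" using p unfolding prob_map_def by blast
  then show "h (p (mv_one M)) = 1"
    using mv_alg.hom_neg[OF N h] mv_alg.hom_zero[OF N h] by (simp add: mv_one_def)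
  assume "mv_odot M a b = mv_zero M"
  then have ba: "mv_le M b (mv_neg M a)"
    unfolding mv_odot_def mv_le_def mv_one_def by (metis M mv_alg.mv_comm mv_alg.mv_neg_neg)
  then have "mv_inf M b (mv_neg M a) = b"
    unfolding mv_inf_def mv_sup_def mv_le_def mv_one_def by (rule mv_alg.minf_absorb[OF M])
  then have sum: "p (mv_add M a b) = mv_add N (p a) (p b)" using p unfolding prob_map_def by metis
  have "h (p b) \<le> h (mv_neg N (p a))"
    using prob_map_mono[OF assms(1,2) p ba] p mv_alg.hom_mono[OF N h]
    by (simp add: prob_map_def mv_le_def mv_one_def)
  then show "h (p (mv_add M a b)) = h (p a) + h (p b)"
    using sum mv_alg.hom_madd[OF N h] mv_alg.hom_neg[OF N h] by simp
qed

lemma dual_in_St: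
  assumes "mv_algebra M" and "mv_algebra N" and "prob_map M N p" and "I \<in> MaxSpec N"
  shows "dual N p I \<in> St M"
proof -
  have N: "mv_alg N" using assms(2) by (simp add: mv_alg_def)
  have "mv_state M (\<lambda>a. mv_alg.hom_of N I (p a))"
    by (rule mv_state_hom_comp_prob_map[OF assms(1-3) mv_alg.mv_hom_unit_hom_of[OF N assms(4)]])
  then show ?thesis unfolding St_def mv_alg.dual_eq_hom_of[OF N assms(4)] by simp
qed

theorem lemma4p2:
  fixes M :: "'a mv" and N :: "'b mv"
  assumes "mv_algebra M" and "mv_algebra N"
  shows "(\<forall>p. prob_map M N p \<longrightarrow>
            continuous_map (MaxTop N) (top_of_set (St M)) (dual N p)) \<and>
         (semisimple N \<longrightarrow>
            bij_betw (dual N) {p. prob_map M N p} (dual N ` {p. prob_map M N p}))"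
proof -
  have N: "mv_alg N" using assms(2) by (simp add: mv_alg_def)
  have "continuous_map (MaxTop N) (top_of_set (St M)) (dual N p)" if "prob_map M N p" for p
    unfolding continuous_map_in_subtopology
    using mv_alg.continuous_map_dual[OF N] dual_in_St[OF assms that]
    by (auto simp: mv_alg.topspace_MaxTop[OF N])
  moreover have "bij_betw (dual N) P (dual N ` P)" if "semisimple N" for P :: "('a \<Rightarrow> 'b) set"
    using mv_alg.inj_dual_if_semisimple[OF N that]
    by (intro inj_on_imp_bij_betw) (rule inj_on_subset[OF _ subset_UNIV])
  ultimately show ?thesis by blast
qed

end
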